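(* Let $n\ge 3$ and let $L$ and ${}^*L=e^{\sigma(x)}L+\beta$ be as in the context (a conformal $\beta$-change). Then the Finsler space $(M,L)$ is C-reducible if and only if the Finsler space $(M,{}^*L)$ is C-reducible. That is, the identity $c_{ijk}=h_{ij}M_k+h_{jk}M_i+h_{ki}M_j$ with $M_i=\frac{c_i}{n+1}$ holds identically if and only if ${}^*c_{ijk}={}^*h_{ij}\,{}^*M_k+{}^*h_{jk}\,{}^*M_i+{}^*h_{ki}\,{}^*M_j$ with ${}^*M_i=\frac{{}^*c_i}{n+1}$ holds identically.
   Context: $M$ is a smooth manifold of dimension $n$ with local coordinates $(x^i)$ and induced fiber coordinates $(y^i)$ on $TM$. $L(x,y)$ is a Finsler metric: positive and smooth for $y\neq0$, positively homogeneous of degree 1 in $y$, with positive definite fundamental tensor $g_{ij}=\frac12\frac{\partial^2L^2}{\partial y^i\partial y^j}$ and inverse $g^{ij}$. $\sigma(x)$ is a smooth function on $M$ and $\beta(x,y)=b_i(x)y^i$ is a 1-form; the conformal $\beta$-change is ${}^*L=e^{\sigma(x)}L+\beta$, assumed to be again a Finsler metric. Notation: $l_i=\partial L/\partial y^i$, $h_{ij}=g_{ij}-l_il_j$ (angular metric), $c_{ijk}=\frac12\partial g_{ij}/\partial y^k$, $c_i=g^{jk}c_{ijk}$. Quantities built from ${}^*L$ by the same formulas (using ${}^*g_{ij}$ and its inverse ${}^*g^{ij}$) are denoted with a left asterisk: ${}^*l_i,{}^*h_{ij},{}^*c_{ijk},{}^*c_i={}^*g^{jk}\,{}^*c_{ijk}$.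 A Finsler space of dimension $n\ge3$ is C-reducible if $c_{ijk}=h_{ij}M_k+h_{jk}M_i+h_{ki}M_j$ with $M_i=c_i/(n+1)$. *)

theory Defs
  imports "HOL-Analysis.Analysis"
begin

text \<open>Local-coordinate rendering. A coordinate chart of M is an open set U of R^n
 (index type 'n, n = CARD('n)); a point of TM over the chart is (x,y) with x in U and
 y in R^n (fiber coordinates).\<close>

definition pdir :: "('a::euclidean_space \<Rightarrow> real) \<Rightarrow> 'a \<Rightarrow> ('a \<Rightarrow> real)" where
  "pdir f v = (\<lambda>z. frechet_derivative f (at z) v)"

definition smooth_on :: "'a::euclidean_space set \<Rightarrow> ('a \<Rightarrow> real) \<Rightarrow> bool" where
  "smooth_on S f \<longleftrightarrow> (\<forall>vs. set vs \<subseteq> Basis \<longrightarrow> (foldr (\<lambda>v g. pdir g v) vs f) differentiable_on S)"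

definition dy :: "(real^'n \<Rightarrow> real) \<Rightarrow> 'n \<Rightarrow> (real^'n \<Rightarrow> real)" where
  "dy f i = pdir f (axis i 1)"

text \<open>Quantities built from a function F (= L(x,.) at a fixed point x).\<close>
definition ltens :: "(real^'n \<Rightarrow> real) \<Rightarrow> real^'n \<Rightarrow> 'n \<Rightarrow> real" where
  "ltens F y i = dy F i y"

definition gtens :: "(real^'n \<Rightarrow> real) \<Rightarrow> real^'n \<Rightarrow> 'n \<Rightarrow> 'n \<Rightarrow> real" where
  "gtens F y i j = (1/2) * dy (dy (\<lambda>z. (F z)^2) i) j y"

definition gmat :: "(real^'n \<Rightarrow> real) \<Rightarrow> real^'n \<Rightarrow> real^'n^'n" where
  "gmat F y = (\<chi> i j. gtens F y i j)"

definition ginv :: "(real^'n \<Rightarrow> real) \<Rightarrow> real^'n \<Rightarrow> 'n \<Rightarrow> 'n \<Rightarrow> real" where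
  "ginv F y i j = matrix_inv (gmat F y) $ i $ j"

definition htens :: "(real^'n \<Rightarrow> real) \<Rightarrow> real^'n \<Rightarrow> 'n \<Rightarrow> 'n \<Rightarrow> real" where
  "htens F y i j = gtens F y i j - ltens F y i * ltens F y j"

definition ctens :: "(real^'n \<Rightarrow> real) \<Rightarrow> real^'n \<Rightarrow> 'n \<Rightarrow> 'n \<Rightarrow> 'n \<Rightarrow> real" where
  "ctens F y i j k = (1/2) * dy (\<lambda>z. gtens F z i j) k y"

definition cvec :: "(real^'n \<Rightarrow> real) \<Rightarrow> real^'n \<Rightarrow> 'n \<Rightarrow> real" where
  "cvec F y i = (\<Sum>j\<in>UNIV. \<Sum>k\<in>UNIV. ginv F y j k * ctens F y i j k)"

definition Mvec :: "(real^'n \<Rightarrow> real) \<Rightarrow> real^'n \<Rightarrow> 'n \<Rightarrow> real" where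
  "Mvec F y i = cvec F y i / (real CARD('n) + 1)"

definition finsler_metric :: "(real^'n) set \<Rightarrow> (real^'n \<Rightarrow> real^'n \<Rightarrow> real) \<Rightarrow> bool" where
  "finsler_metric U L \<longleftrightarrow>
     smooth_on (U \<times> (UNIV - {0})) (\<lambda>(x, y). L x y) \<and>
     (\<forall>x\<in>U. \<forall>y. y \<noteq> 0 \<longrightarrow>
        L x y > 0 \<and>
        (\<forall>c>0. L x (c *\<^sub>R y) = c * L x y) \<and>
        (\<forall>v. v \<noteq> 0 \<longrightarrow> (\<Sum>i\<in>UNIV. \<Sum>j\<in>UNIV. gtens (L x) y i j * v $ i * v $ j) > 0))"

definition C_reducible :: "(real^'n) set \<Rightarrow> (real^'n \<Rightarrow> real^'n \<Rightarrow> real) \<Rightarrow> bool" where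
  "C_reducible U L \<longleftrightarrow>
     (\<forall>x\<in>U. \<forall>y. y \<noteq> 0 \<longrightarrow> (\<forall>i j k.
        ctens (L x) y i j k =
          htens (L x) y i j * Mvec (L x) y k + htens (L x) y j k * Mvec (L x) y i
          + htens (L x) y k i * Mvec (L x) y j))"

definition conf_beta_change ::
  "(real^'n \<Rightarrow> real) \<Rightarrow> (real^'n \<Rightarrow> real^'n) \<Rightarrow> (real^'n \<Rightarrow> real^'n \<Rightarrow> real) \<Rightarrow> (real^'n \<Rightarrow> real^'n \<Rightarrow> real)" where
  "conf_beta_change \<sigma> b L = (\<lambda>x y. exp (\<sigma> x) * L x y + (\<Sum>i\<in>UNIV. b x $ i * y $ i))"

end

theory Submission
  imports Defs
begin

text \<open>Only derivatives in the fibre variable \<open>y\<close> enter, so fix \<open>x\<close> and write \<open>L\<close> for \<open>L(x,\<cdot>)\<close>,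
  \<open>c = exp (\<sigma> x)\<close> and \<open>*L = c L + \<beta>\<close>. By homogeneity \<open>g\<^sub>i\<^sub>j = l\<^sub>i l\<^sub>j + L L\<^sub>i\<^sub>j\<close> with \<open>L\<^sub>i\<^sub>j\<close> the
  \<open>y\<close>-Hessian, and since \<open>*L\<^sub>i\<^sub>j = c L\<^sub>i\<^sub>j\<close> one gets \<open>*h\<^sub>i\<^sub>j = \<tau> h\<^sub>i\<^sub>j\<close> with \<open>\<tau> = c *L / L > 0\<close> and
  \<open>*C\<^sub>i\<^sub>j\<^sub>k = \<tau> C\<^sub>i\<^sub>j\<^sub>k + (c / 2L) (h\<^sub>i\<^sub>j m\<^sub>k + h\<^sub>j\<^sub>k m\<^sub>i + h\<^sub>k\<^sub>i m\<^sub>j)\<close>, where \<open>m\<^sub>i = *l\<^sub>i - (*L / L) l\<^sub>i\<close>.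
  The inverse \<open>*g\<^sup>i\<^sup>j\<close> agrees with \<open>g\<^sup>i\<^sup>j / \<tau>\<close> up to terms containing \<open>y\<^sup>i\<close> or \<open>y\<^sup>j\<close>, which are
  annihilated by the Cartan tensors (Euler's relations), so \<open>*M\<^sub>i = M\<^sub>i + m\<^sub>i / (2 *L)\<close>.
  Substituting, \<open>*C\<^sub>i\<^sub>j\<^sub>k - \<Sigma> *h *M = \<tau> (C\<^sub>i\<^sub>j\<^sub>k - \<Sigma> h M)\<close>, so the two C-reducibility conditions
  are equivalent.\<close>

lemma pdir_eq_derivative: "(f has_derivative f') (at x) \<Longrightarrow> pdir f v x = f' v"
  by (simp add: pdir_def frechet_derivative_at[symmetric])

lemma dy_eq_derivative: "(f has_derivative f') (at x) \<Longrightarrow> dy f k x = f' (axis k 1)"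
  by (simp add: dy_def pdir_eq_derivative)

lemma pdir_transform_open:
  assumes "open X" "x \<in> X" "\<And>z. z \<in> X \<Longrightarrow> f z = g z"
  shows "pdir f v x = pdir g v x"
proof -
  have "(f has_derivative D) (at x) \<longleftrightarrow> (g has_derivative D) (at x)" for D
    using has_derivative_transform_within_open[OF _ assms(1,2)] assms(3) by metis
  then show ?thesis by (simp add: pdir_def frechet_derivative_def)
qed

lemma dy_transform_open:
  assumes "open X" "x \<in> X" "\<And>z. z \<in> X \<Longrightarrow> f z = g z"
  shows "dy f k x = dy g k x"
  using pdir_transform_open[OF assms] by (simp add: dy_def)

lemma differentiable_transform_open:
  assumes "f differentiable at x" "open X" "x \<in> X" "\<And>z. z \<in> X \<Longrightarrow> f z = g z"
  shows "g differentiable at x"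
  using assms has_derivative_transform_within_open unfolding differentiable_def by metis

lemma dy_add:
  assumes "f differentiable at z" "g differentiable at z"
  shows "dy (\<lambda>z. f z + g z) k z = dy f k z + dy g k z"
  using dy_eq_derivative[OF has_derivative_add[OF assms[unfolded frechet_derivative_works]]]
  by (simp add: dy_def pdir_def)

lemma dy_mult:
  assumes "f differentiable at z" "g differentiable at z"
  shows "dy (\<lambda>z. f z * g z) k z = f z * dy g k z + dy f k z * g z"
  using dy_eq_derivative[OF has_derivative_mult[OF assms[unfolded frechet_derivative_works]]]
  by (simp add: dy_def pdir_def)

lemma dy_cmult:
  assumes "f differentiable at z"
  shows "dy (\<lambda>z. c * f z) k z = c * dy f k z"
  using dy_eq_derivative[OF has_derivative_mult_right[OF assms[unfolded frechet_derivative_works]]]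
  by (simp add: dy_def pdir_def)

lemma dy_const: "dy (\<lambda>z. c) k z = 0"
  by (simp add: dy_def pdir_def)

lemma has_derivative_linear_form:
  "((\<lambda>z::real^'n. \<Sum>i\<in>UNIV. b $ i * z $ i) has_derivative (\<lambda>h. \<Sum>i\<in>UNIV. b $ i * h $ i)) (at z)"
  by (intro has_derivative_sum has_derivative_mult_right bounded_linear_imp_has_derivative bounded_linear_vec_nth)

lemma differentiable_linear_form: "(\<lambda>z::real^'n. \<Sum>i\<in>UNIV. b $ i * z $ i) differentiable at z"
  using has_derivative_linear_form unfolding differentiable_def by blast

lemma dy_linear_form: "dy (\<lambda>z::real^'n. \<Sum>i\<in>UNIV. b $ i * z $ i) k z = b $ k"
  by (simp add: dy_eq_derivative[OF has_derivative_linear_form] axis_def if_distrib cong: if_cong)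

section \<open>Symmetry of mixed partial derivatives\<close>

lemma has_real_derivative_along_line:
  fixes f :: "'a::euclidean_space \<Rightarrow> real"
  assumes "f differentiable at (a + t *\<^sub>R u)"
  shows "((\<lambda>s. f (a + s *\<^sub>R u)) has_real_derivative pdir f u (a + t *\<^sub>R u)) (at t)"
proof -
  let ?D = "frechet_derivative f (at (a + t *\<^sub>R u))"
  have D: "(f has_derivative ?D) (at (a + t *\<^sub>R u))"
    using assms frechet_derivative_works by blast
  have "((\<lambda>s. a + s *\<^sub>R u) has_derivative (\<lambda>s. s *\<^sub>R u)) (at t)"
    by (auto intro!: derivative_eq_intros)
  from has_derivative_compose[OF this D]
  have "((\<lambda>s. f (a + s *\<^sub>R u)) has_derivative (\<lambda>s. ?D (s *\<^sub>R u))) (at t)" .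
  moreover have "(\<lambda>s. ?D (s *\<^sub>R u)) = (\<lambda>s. pdir f u (a + t *\<^sub>R u) * s)"
    using linear_scale[OF has_derivative_linear[OF D]] by (auto simp: pdir_def)
  ultimately show ?thesis
    by (simp add: has_field_derivative_def)
qed

lemma second_difference_mean_value:
  fixes f :: "'a::euclidean_space \<Rightarrow> real"
  assumes diff: "\<And>z. dist z y < \<delta> \<Longrightarrow> f differentiable at z \<and> pdir f u differentiable at z"
    and "h > 0" "h * (norm u + norm v) < \<delta>"
  obtains p where "dist p y < \<delta>"
    "f (y + h *\<^sub>R u + h *\<^sub>R v) - f (y + h *\<^sub>R u) - f (y + h *\<^sub>R v) + f y = h\<^sup>2 * pdir (pdir f u) v p"
proof -
  have near: "dist (y + s *\<^sub>R u + t *\<^sub>R v) y < \<delta>" if "0 \<le> s" "s \<le> h" "0 \<le> t" "t \<le> h" for s t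
  proof -
    have "dist (y + s *\<^sub>R u + t *\<^sub>R v) y \<le> s * norm u + t * norm v"
      using norm_triangle_ineq[of "s *\<^sub>R u" "t *\<^sub>R v"] that by (simp add: dist_norm)
    also have "\<dots> \<le> h * (norm u + norm v)"
      using that by (simp add: distrib_left add_mono mult_right_mono)
    finally show ?thesis using assms(3) by simp
  qed
  define \<psi> where "\<psi> s = f ((y + h *\<^sub>R v) + s *\<^sub>R u) - f (y + s *\<^sub>R u)" for s
  have "(\<psi> has_real_derivative pdir f u ((y + h *\<^sub>R v) + s *\<^sub>R u) - pdir f u (y + s *\<^sub>R u)) (at s)"
    if "0 \<le> s" "s \<le> h" for s
    unfolding \<psi>_def using diff near[of s h] near[of s 0] that assms(2)
    by (intro DERIV_diff has_real_derivative_along_line) (simp_all add: algebra_simps)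
  from MVT2[OF assms(2) this] obtain \<xi> where \<xi>: "0 < \<xi>" "\<xi> < h"
    "\<psi> h - \<psi> 0 = h * (pdir f u ((y + h *\<^sub>R v) + \<xi> *\<^sub>R u) - pdir f u (y + \<xi> *\<^sub>R u))"
    by auto
  define \<phi> where "\<phi> t = pdir f u ((y + \<xi> *\<^sub>R u) + t *\<^sub>R v)" for t
  have "(\<phi> has_real_derivative pdir (pdir f u) v ((y + \<xi> *\<^sub>R u) + t *\<^sub>R v)) (at t)"
    if "0 \<le> t" "t \<le> h" for t
    unfolding \<phi>_def using diff near[of \<xi> t] that \<xi> by (intro has_real_derivative_along_line) simp
  from MVT2[OF assms(2) this] obtain \<eta> where \<eta>: "0 < \<eta>" "\<eta> < h"
    "\<phi> h - \<phi> 0 = h * pdir (pdir f u) v ((y + \<xi> *\<^sub>R u) + \<eta> *\<^sub>R v)"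
    by auto
  have "f (y + h *\<^sub>R u + h *\<^sub>R v) - f (y + h *\<^sub>R u) - f (y + h *\<^sub>R v) + f y = \<psi> h - \<psi> 0"
    by (simp add: \<psi>_def algebra_simps)
  also have "\<dots> = h * (\<phi> h - \<phi> 0)"
    by (simp add: \<xi>(3) \<phi>_def algebra_simps)
  also have "\<dots> = h\<^sup>2 * pdir (pdir f u) v ((y + \<xi> *\<^sub>R u) + \<eta> *\<^sub>R v)"
    by (simp add: \<eta>(3) power2_eq_square)
  finally show ?thesis
    using that near[of \<xi> \<eta>] \<xi> \<eta> by simp
qed

text \<open>Clairaut--Schwarz: both mixed partials are limits of the same second difference quotient.\<close>

lemma pdir_pdir_commute:
  fixes f :: "'a::euclidean_space \<Rightarrow> real"
  assumes "open S" "y \<in> S"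
    and diff: "\<And>z. z \<in> S \<Longrightarrow>
      f differentiable at z \<and> pdir f u differentiable at z \<and> pdir f v differentiable at z"
    and cont: "isCont (pdir (pdir f u) v) y" "isCont (pdir (pdir f v) u) y"
  shows "pdir (pdir f u) v y = pdir (pdir f v) u y"
proof -
  let ?Q1 = "pdir (pdir f u) v" and ?Q2 = "pdir (pdir f v) u"
  have "\<bar>?Q1 y - ?Q2 y\<bar> < e" if "e > 0" for e
  proof -
    obtain d0 where d0: "d0 > 0" "ball y d0 \<subseteq> S"
      using assms(1,2) open_contains_ball by blast
    obtain d1 where d1: "d1 > 0" "\<And>z. dist z y < d1 \<Longrightarrow> dist (?Q1 z) (?Q1 y) < e/2"
      using cont(1) \<open>e > 0\<close> unfolding continuous_at_eps_delta by (meson half_gt_zero)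
    obtain d2 where d2: "d2 > 0" "\<And>z. dist z y < d2 \<Longrightarrow> dist (?Q2 z) (?Q2 y) < e/2"
      using cont(2) \<open>e > 0\<close> unfolding continuous_at_eps_delta by (meson half_gt_zero)
    define \<delta> where "\<delta> = min d0 (min d1 d2)"
    define N where "N = norm u + norm v + 1"
    define h where "h = \<delta> / (2 * N)"
    have "\<delta> > 0"
      using d0 d1 d2 by (simp add: \<delta>_def)
    have "N > 0"
      by (simp add: N_def add_nonneg_pos)
    then have "h > 0" "h * (norm u + norm v + 1) = \<delta> / 2"
      using \<open>\<delta> > 0\<close> unfolding h_def N_def[symmetric] by simp_all
    then have h: "h > 0" "h * (norm u + norm v) < \<delta>" "h * (norm v + norm u) < \<delta>"
      using \<open>\<delta> > 0\<close> by (simp_all only: distrib_left add.commute mult_1_right)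
    have diff': "f differentiable at z \<and> pdir f u differentiable at z \<and> pdir f v differentiable at z"
      if "dist z y < \<delta>" for z
      using diff d0(2) that by (auto simp: \<delta>_def dist_commute)
    obtain p1 where p1: "dist p1 y < \<delta>"
      "f (y + h *\<^sub>R u + h *\<^sub>R v) - f (y + h *\<^sub>R u) - f (y + h *\<^sub>R v) + f y = h\<^sup>2 * ?Q1 p1"
      using second_difference_mean_value[of y \<delta> f u h v] diff' h by blast
    obtain p2 where p2: "dist p2 y < \<delta>"
      "f (y + h *\<^sub>R v + h *\<^sub>R u) - f (y + h *\<^sub>R v) - f (y + h *\<^sub>R u) + f y = h\<^sup>2 * ?Q2 p2"
      using second_difference_mean_value[of y \<delta> f v h u] diff' h by blast
    have "?Q1 p1 = ?Q2 p2"
      using p1(2) p2(2) h(1) by (simp add: algebra_simps)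
    moreover have "dist (?Q1 p1) (?Q1 y) < e/2" "dist (?Q2 p2) (?Q2 y) < e/2"
      using d1 d2 p1(1) p2(1) by (auto simp: \<delta>_def)
    ultimately show ?thesis
      unfolding dist_real_def by arith
  qed
  then have "\<not> \<bar>?Q1 y - ?Q2 y\<bar> > 0"
    using less_irrefl by blast
  then show ?thesis
    by simp
qed

lemma dy_dy_commute:
  fixes f :: "real^'n \<Rightarrow> real"
  assumes "open S" "y \<in> S"
    and "\<And>z. z \<in> S \<Longrightarrow> f differentiable at z \<and> dy f i differentiable at z \<and> dy f j differentiable at z"
    and "dy (dy f i) j differentiable at y" "dy (dy f j) i differentiable at y"
  shows "dy (dy f i) j y = dy (dy f j) i y"
  using pdir_pdir_commute[OF assms(1,2), of f "axis i 1" "axis j 1"] assms(3-5)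
  by (simp add: dy_def differentiable_imp_continuous_within)

section \<open>Euler's theorem for positively homogeneous functions\<close>

lemma pdir_eq_sum_dy:
  fixes H :: "real^'n \<Rightarrow> real"
  assumes "H differentiable at z"
  shows "pdir H v z = (\<Sum>k\<in>UNIV. v $ k * dy H k z)"
proof -
  let ?D = "frechet_derivative H (at z)"
  have "linear ?D"
    using assms frechet_derivative_works has_derivative_linear by blast
  have "?D v = ?D (\<Sum>k\<in>UNIV. v $ k *\<^sub>R axis k 1)"
    using basis_expansion[of v] by (simp add: scalar_mult_eq_scaleR)
  also have "\<dots> = (\<Sum>k\<in>UNIV. v $ k * ?D (axis k 1))"
    using \<open>linear ?D\<close> by (simp add: linear_sum linear_scale)
  finally show ?thesis
    by (simp add: pdir_def dy_def)
qed

lemma euler_homogeneous: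
  fixes H :: "real^'n \<Rightarrow> real"
  assumes "H differentiable at z"
    and homogeneous: "\<And>t. t > 0 \<Longrightarrow> H (t *\<^sub>R z) = w t * H z"
    and "(w has_real_derivative w') (at 1)"
  shows "(\<Sum>k\<in>UNIV. dy H k z * z $ k) = w' * H z"
proof -
  have "((\<lambda>t. H (t *\<^sub>R z)) has_real_derivative pdir H z z) (at 1)"
    using has_real_derivative_along_line[of H 0 1 z] assms(1) by simp
  moreover have "((\<lambda>t. H (t *\<^sub>R z)) has_real_derivative w' * H z) (at 1)"
    using DERIV_cmult_right[OF assms(3)]
    by (rule has_field_derivative_transform_within_open[of _ _ _ "{0<..}"]) (auto simp: homogeneous)
  ultimately have "pdir H z z = w' * H z"
    using DERIV_unique by blast
  then show ?thesis
    using pdir_eq_sum_dy[OF assms(1)] by (simp add: mult.commute)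
qed

lemma dy_homogeneous:
  fixes H :: "real^'n \<Rightarrow> real"
  assumes diff: "\<And>z. z \<noteq> 0 \<Longrightarrow> H differentiable at z"
    and homogeneous: "\<And>z t. z \<noteq> 0 \<Longrightarrow> t > 0 \<Longrightarrow> H (t *\<^sub>R z) = w t * H z"
    and "z \<noteq> 0" "t > 0"
  shows "t * dy H i (t *\<^sub>R z) = w t * dy H i z"
proof -
  let ?D1 = "frechet_derivative H (at (t *\<^sub>R z))" and ?D2 = "frechet_derivative H (at z)"
  have "t *\<^sub>R z \<noteq> 0"
    using assms(3,4) by simp
  then have D1: "(H has_derivative ?D1) (at (t *\<^sub>R z))"
    using diff frechet_derivative_works by blast
  have D2: "(H has_derivative ?D2) (at z)"
    using diff assms(3) frechet_derivative_works by blast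
  have "((\<lambda>z'. t *\<^sub>R z') has_derivative (\<lambda>v. t *\<^sub>R v)) (at z)"
    by (auto intro!: derivative_eq_intros)
  from has_derivative_compose[OF this D1]
  have "((\<lambda>z'. w t * H z') has_derivative (\<lambda>v. ?D1 (t *\<^sub>R v))) (at z)"
    by (rule has_derivative_transform_within_open[of _ _ _ _ "UNIV - {0}"])
      (auto simp: open_delete assms(3,4) homogeneous)
  from has_derivative_unique[OF this has_derivative_mult_right[OF D2]]
  have "?D1 (t *\<^sub>R axis i 1) = w t * ?D2 (axis i 1)"
    by metis
  then show ?thesis
    using linear_scale[OF has_derivative_linear[OF D1]] by (simp add: dy_def pdir_def)
qed

definition partials3_differentiable_off_0 :: "(real^'n \<Rightarrow> real) \<Rightarrow> bool" where
  "partials3_differentiable_off_0 F \<longleftrightarrow> (\<forall>z. z \<noteq> 0 \<longrightarrow>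
     F differentiable at z \<and> (\<forall>i. dy F i differentiable at z) \<and>
     (\<forall>i j. dy (dy F i) j differentiable at z) \<and> (\<forall>i j k. dy (dy (dy F i) j) k differentiable at z))"

lemma partials3_differentiable_off_0D:
  assumes "partials3_differentiable_off_0 F" "z \<noteq> 0"
  shows "F differentiable at z" "dy F i differentiable at z" "dy (dy F i) j differentiable at z"
    "dy (dy (dy F i) j) k differentiable at z"
  using assms unfolding partials3_differentiable_off_0_def by blast+

locale positively_homogeneous =
  fixes F :: "real^'n \<Rightarrow> real"
  assumes partials3: "partials3_differentiable_off_0 F"
    and homogeneous: "\<And>z t. z \<noteq> 0 \<Longrightarrow> t > 0 \<Longrightarrow> F (t *\<^sub>R z) = t * F z"
begin

lemmas differentiable = partials3_differentiable_off_0D[OF partials3]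

lemma dy_homogeneous_0: "z \<noteq> 0 \<Longrightarrow> t > 0 \<Longrightarrow> dy F i (t *\<^sub>R z) = dy F i z"
  using dy_homogeneous[of F "\<lambda>t. t" z t i] differentiable homogeneous by auto

lemma dy_dy_homogeneous: "z \<noteq> 0 \<Longrightarrow> t > 0 \<Longrightarrow> dy (dy F i) j (t *\<^sub>R z) = dy (dy F i) j z / t"
  using dy_homogeneous[of "dy F i" "\<lambda>t. 1" z t j] differentiable dy_homogeneous_0
  by (auto simp: field_simps)

lemma euler: "z \<noteq> 0 \<Longrightarrow> (\<Sum>k\<in>UNIV. dy F k z * z $ k) = F z"
  using euler_homogeneous[of F z "\<lambda>t. t" 1] differentiable homogeneous
  by (auto intro!: derivative_eq_intros)

lemma euler_dy: "z \<noteq> 0 \<Longrightarrow> (\<Sum>k\<in>UNIV. dy (dy F i) k z * z $ k) = 0"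
  using euler_homogeneous[of "dy F i" z "\<lambda>t. 1" 0] differentiable dy_homogeneous_0
  by (auto intro!: derivative_eq_intros)

lemma euler_dy_dy:
  assumes "z \<noteq> 0"
  shows "(\<Sum>k\<in>UNIV. dy (dy (dy F i) j) k z * z $ k) = - dy (dy F i) j z"
proof -
  have "((\<lambda>t. 1 / t) has_real_derivative -1) (at (1::real))"
    using DERIV_inverse[of "1::real"] by (simp add: inverse_eq_divide)
  then show ?thesis
    using euler_homogeneous[of "dy (dy F i) j" z "\<lambda>t. 1 / t" "-1"] differentiable dy_dy_homogeneous assms
    by auto
qed

lemma dy_dy_sym: "z \<noteq> 0 \<Longrightarrow> dy (dy F i) j z = dy (dy F j) i z"
  by (rule dy_dy_commute[where S = "UNIV - {0}"]) (simp_all add: open_delete differentiable)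

lemma dy_dy_dy_sym: "z \<noteq> 0 \<Longrightarrow> dy (dy (dy F i) j) k z = dy (dy (dy F i) k) j z"
  by (rule dy_dy_commute[where S = "UNIV - {0}"]) (simp_all add: open_delete differentiable)

end

section \<open>Fundamental and Cartan tensors\<close>

lemma gtens_eq:
  assumes F: "partials3_differentiable_off_0 F" and "z \<noteq> 0"
  shows "gtens F z i j = dy F i z * dy F j z + F z * dy (dy F i) j z"
proof -
  note diff = partials3_differentiable_off_0D[OF F]
  have "dy (\<lambda>z. (F z)\<^sup>2) i w = 2 * (F w * dy F i w)" if "w \<noteq> 0" for w
    using dy_mult[OF diff(1) diff(1), OF that that] by (simp add: power2_eq_square)
  then have "dy (dy (\<lambda>z. (F z)\<^sup>2) i) j z = dy (\<lambda>w. 2 * (F w * dy F i w)) j z"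
    by (intro dy_transform_open[of "UNIV - {0}"]) (simp_all add: open_delete assms(2))
  also have "\<dots> = 2 * (F z * dy (dy F i) j z + dy F j z * dy F i z)"
    using dy_cmult[OF differentiable_mult[OF diff(1,2)[OF assms(2)]]] dy_mult[OF diff(1,2)[OF assms(2)]]
    by simp
  finally show ?thesis
    by (simp add: gtens_def)
qed

lemma ctens_eq:
  assumes F: "partials3_differentiable_off_0 F" and "z \<noteq> 0"
  shows "ctens F z i j k = (1/2) * (dy (dy F i) k z * dy F j z + dy F i z * dy (dy F j) k z
     + dy F k z * dy (dy F i) j z + F z * dy (dy (dy F i) j) k z)"
proof -
  have "dy (\<lambda>w. gtens F w i j) k z = dy (\<lambda>w. dy F i w * dy F j w + F w * dy (dy F i) j w) k z"
    by (intro dy_transform_open[of "UNIV - {0}"]) (simp_all add: open_delete assms(2) gtens_eq[OF F])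
  also have "\<dots> = dy (dy F i) k z * dy F j z + dy F i z * dy (dy F j) k z
     + dy F k z * dy (dy F i) j z + F z * dy (dy (dy F i) j) k z"
    using partials3_differentiable_off_0D[OF F assms(2)]
    by (simp add: dy_add dy_mult algebra_simps)
  finally show ?thesis
    by (simp add: ctens_def)
qed

lemma gmat_eq:
  assumes "partials3_differentiable_off_0 F" "y \<noteq> 0"
  shows "gmat F y = (\<chi> i j. dy F i y * dy F j y + F y * dy (dy F i) j y)"
  by (simp add: gmat_def vec_eq_iff gtens_eq[OF assms])

definition fibre_beta_change :: "real \<Rightarrow> real^'n \<Rightarrow> (real^'n \<Rightarrow> real) \<Rightarrow> real^'n \<Rightarrow> real" where
  "fibre_beta_change c b F = (\<lambda>y. c * F y + (\<Sum>i\<in>UNIV. b $ i * y $ i))"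

lemma conf_beta_change_eq_fibre_beta_change:
  "conf_beta_change \<sigma> b L x = fibre_beta_change (exp (\<sigma> x)) (b x) (L x)"
  by (simp add: conf_beta_change_def fibre_beta_change_def)

context
  fixes F :: "real^'n \<Rightarrow> real" and c :: real and b :: "real^'n"
  assumes F: "partials3_differentiable_off_0 F"
begin

private lemmas diff = partials3_differentiable_off_0D[OF F]

private lemma open_punctured: "open (UNIV - {0::real^'n})"
  by (simp add: open_delete)

lemma dy_fibre_beta_change:
  assumes "z \<noteq> 0"
  shows "dy (fibre_beta_change c b F) i z = c * dy F i z + b $ i"
proof -
  have "(\<lambda>y. c * F y) differentiable at z"
    using diff(1)[OF assms] by simp
  then show ?thesis
    unfolding fibre_beta_change_def
    by (simp add: dy_add[OF _ differentiable_linear_form] dy_cmult[OF diff(1)[OF assms]] dy_linear_form)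
qed

lemma dy_dy_fibre_beta_change:
  assumes "z \<noteq> 0"
  shows "dy (dy (fibre_beta_change c b F) i) j z = c * dy (dy F i) j z"
proof -
  have "dy (dy (fibre_beta_change c b F) i) j z = dy (\<lambda>w. c * dy F i w + b $ i) j z"
    by (rule dy_transform_open[OF open_punctured]) (simp_all add: assms dy_fibre_beta_change)
  also have "\<dots> = c * dy (dy F i) j z"
    using diff(2)[OF assms] by (simp add: dy_add dy_cmult dy_const)
  finally show ?thesis .
qed

lemma dy_dy_dy_fibre_beta_change:
  assumes "z \<noteq> 0"
  shows "dy (dy (dy (fibre_beta_change c b F) i) j) k z = c * dy (dy (dy F i) j) k z"
proof -
  have "dy (dy (dy (fibre_beta_change c b F) i) j) k z = dy (\<lambda>w. c * dy (dy F i) j w) k z"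
    by (rule dy_transform_open[OF open_punctured]) (simp_all add: assms dy_dy_fibre_beta_change)
  also have "\<dots> = c * dy (dy (dy F i) j) k z"
    using diff(3)[OF assms] by (simp add: dy_cmult)
  finally show ?thesis .
qed

lemma partials3_differentiable_fibre_beta_change:
  "partials3_differentiable_off_0 (fibre_beta_change c b F)"
  unfolding partials3_differentiable_off_0_def
proof (intro allI impI conjI)
  fix z :: "real^'n" and i j k
  assume z: "z \<noteq> 0"
  show "fibre_beta_change c b F differentiable at z"
    unfolding fibre_beta_change_def
    by (intro differentiable_add differentiable_mult differentiable_const differentiable_linear_form diff(1) z)
  show "dy (fibre_beta_change c b F) i differentiable at z"
  proof (rule differentiable_transform_open[OF _ open_punctured])
    show "(\<lambda>w. c * dy F i w + b $ i) differentiable at z"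
      by (intro differentiable_add differentiable_mult differentiable_const diff z)
  qed (simp_all add: z dy_fibre_beta_change)
  show "dy (dy (fibre_beta_change c b F) i) j differentiable at z"
  proof (rule differentiable_transform_open[OF _ open_punctured])
    show "(\<lambda>w. c * dy (dy F i) j w) differentiable at z"
      by (intro differentiable_mult differentiable_const diff z)
  qed (simp_all add: z dy_dy_fibre_beta_change)
  show "dy (dy (dy (fibre_beta_change c b F) i) j) k differentiable at z"
  proof (rule differentiable_transform_open[OF _ open_punctured])
    show "(\<lambda>w. c * dy (dy (dy F i) j) k w) differentiable at z"
      by (intro differentiable_mult differentiable_const diff z)
  qed (simp_all add: z dy_dy_dy_fibre_beta_change)
qed

end

lemma positive_definite_invertible:
  fixes A :: "real^'n^'n"
  assumes "\<And>v. v \<noteq> 0 \<Longrightarrow> (\<Sum>i\<in>UNIV. \<Sum>j\<in>UNIV. A $ i $ j * v $ i * v $ j) > 0"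
  shows "invertible A"
proof -
  have "x = 0" if "A *v x = 0" for x
  proof -
    have "(\<Sum>i\<in>UNIV. \<Sum>j\<in>UNIV. A $ i $ j * x $ i * x $ j) = (\<Sum>i\<in>UNIV. x $ i * (A *v x) $ i)"
      by (simp add: matrix_vector_mult_def sum_distrib_left mult_ac)
    with that assms[of x] show "x = 0"
      by fastforce
  qed
  then show ?thesis
    using matrix_left_invertible_ker invertible_left_inverse by blast
qed

lemma matrix_inv_mult:
  fixes A :: "real^'n^'n"
  assumes "invertible A"
  shows "A ** matrix_inv A = mat 1" "matrix_inv A ** A = mat 1"
proof -
  have "\<exists>A'. A ** A' = mat 1 \<and> A' ** A = mat 1"
    using assms by (simp add: invertible_def)
  then have "A ** matrix_inv A = mat 1 \<and> matrix_inv A ** A = mat 1"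
    unfolding matrix_inv_def by (rule someI_ex)
  then show "A ** matrix_inv A = mat 1" "matrix_inv A ** A = mat 1"
    by auto
qed

lemma sum_matrix_inv_mult:
  fixes A :: "real^'n^'n"
  assumes "invertible A"
  shows "(\<Sum>k\<in>UNIV. A $ i $ k * matrix_inv A $ k $ j) = (if i = j then 1 else 0)"
    "(\<Sum>k\<in>UNIV. matrix_inv A $ i $ k * A $ k $ j) = (if i = j then 1 else 0)"
  using matrix_inv_mult[OF assms] by (auto simp: vec_eq_iff matrix_matrix_mult_def mat_def)

lemma matrix_inv_symmetric:
  fixes A :: "real^'n^'n"
  assumes "invertible A" "transpose A = A"
  shows "matrix_inv A $ i $ j = matrix_inv A $ j $ i"
proof -
  let ?B = "matrix_inv A"
  have "transpose ?B ** A = mat 1"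
    using arg_cong[OF matrix_inv_mult(1)[OF assms(1)], of transpose] assms(2)
    by (simp add: matrix_transpose_mul)
  then have "transpose ?B = ?B"
    using matrix_mul_assoc[of "transpose ?B" A ?B] matrix_inv_mult(1)[OF assms(1)] by simp
  then have "transpose ?B $ j $ i = ?B $ j $ i"
    by simp
  then show ?thesis
    by (simp add: transpose_def)
qed

lemma matrix_inv_solve:
  fixes A :: "real^'n^'n"
  assumes "invertible A" "\<And>k. (\<Sum>i\<in>UNIV. A $ k $ i * y $ i) = s * w $ k" "s \<noteq> 0"
  shows "(\<Sum>k\<in>UNIV. matrix_inv A $ j $ k * w $ k) = y $ j / s"
proof -
  have "y $ j = (\<Sum>i\<in>UNIV. (\<Sum>k\<in>UNIV. matrix_inv A $ j $ k * A $ k $ i) * y $ i)"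
    by (simp add: sum_matrix_inv_mult[OF assms(1)] if_distrib if_distribR cong: if_cong)
  also have "\<dots> = (\<Sum>k\<in>UNIV. matrix_inv A $ j $ k * (\<Sum>i\<in>UNIV. A $ k $ i * y $ i))"
    by (simp only: sum_distrib_left sum_distrib_right mult.assoc) (rule sum.swap)
  also have "\<dots> = s * (\<Sum>k\<in>UNIV. matrix_inv A $ j $ k * w $ k)"
    by (simp only: assms(2)) (simp add: sum_distrib_left mult_ac)
  finally show ?thesis
    using assms(3) by (simp add: field_simps)
qed

section \<open>The conformal \<open>\<beta>\<close>-change at a point\<close>

text \<open>The data of the Finsler function at one point \<open>y\<close> of a fibre: its value \<open>L\<close>, the value
  \<open>Ls = c L + \<beta>\<close> of the changed function, the gradient \<open>l\<close> and the second and third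
  derivatives \<open>H\<close>, \<open>T\<close> of \<open>L\<close>. Names ending in \<open>s\<close> denote the starred quantities.\<close>

locale beta_change_algebra =
  fixes L Ls c :: real and l b y :: "real^'n"
    and H :: "'n \<Rightarrow> 'n \<Rightarrow> real" and T :: "'n \<Rightarrow> 'n \<Rightarrow> 'n \<Rightarrow> real"
  assumes L_pos: "L > 0" and Ls_pos: "Ls > 0" and c_pos: "c > 0"
    and Ls_eq: "Ls = c * L + (\<Sum>i\<in>UNIV. b $ i * y $ i)"
    and euler_l: "(\<Sum>k\<in>UNIV. l $ k * y $ k) = L"
    and euler_H: "\<And>i. (\<Sum>k\<in>UNIV. H i k * y $ k) = 0"
    and euler_T: "\<And>i j. (\<Sum>k\<in>UNIV. T i j k * y $ k) = - H i j"
    and H_sym: "\<And>i j. H i j = H j i"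
    and T_sym: "\<And>i j k. T i j k = T i k j"
    and g_invertible: "invertible (\<chi> i j. l $ i * l $ j + L * H i j)"
    and gs_invertible: "invertible (\<chi> i j. (c * l $ i + b $ i) * (c * l $ j + b $ j) + Ls * (c * H i j))"
begin

definition "ls i = c * l $ i + b $ i"
definition "g = (\<chi> i j. l $ i * l $ j + L * H i j)"
definition "gs = (\<chi> i j. ls i * ls j + Ls * (c * H i j))"
definition "gi j k = matrix_inv g $ j $ k"
definition "gis j k = matrix_inv gs $ j $ k"
definition "h i j = g $ i $ j - l $ i * l $ j"
definition "hs i j = gs $ i $ j - ls i * ls j"
definition "C i j k = (1/2) * (H i k * l $ j + l $ i * H j k + l $ k * H i j + L * T i j k)"
definition "Cs i j k = (1/2) * (c * H i k * ls j + ls i * (c * H j k) + ls k * (c * H i j) + Ls * (c * T i j k))"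
definition "cv i = (\<Sum>j\<in>UNIV. \<Sum>k\<in>UNIV. gi j k * C i j k)"
definition "cvs i = (\<Sum>j\<in>UNIV. \<Sum>k\<in>UNIV. gis j k * Cs i j k)"
definition "M i = cv i / (real CARD('n) + 1)"
definition "Ms i = cvs i / (real CARD('n) + 1)"
definition "\<tau> = c * Ls / L"
definition "m i = ls i - (Ls / L) * l $ i"

lemma \<tau>_pos: "\<tau> > 0"
  using c_pos Ls_pos L_pos by (simp add: \<tau>_def)

lemma h_eq: "h i j = L * H i j"
  by (simp add: h_def g_def)

lemma hs_eq: "hs i j = \<tau> * h i j"
  using L_pos by (simp add: hs_def gs_def h_eq \<tau>_def)

lemma h_sym: "h i j = h j i"
  by (simp add: h_eq H_sym)

lemma gs_eq: "gs $ i $ j = \<tau> * g $ i $ j - \<tau> * (l $ i * l $ j) + ls i * ls j"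
  using L_pos by (simp add: gs_def g_def \<tau>_def field_simps)

lemma gi_sym: "gi j k = gi k j"
proof -
  have "transpose g = g"
    by (simp add: g_def transpose_def vec_eq_iff H_sym mult.commute)
  then show ?thesis
    unfolding gi_def using matrix_inv_symmetric g_invertible[folded g_def] by blast
qed

lemma gi_g: "(\<Sum>k\<in>UNIV. gi j k * g $ k $ i) = (if j = i then 1 else 0)"
  using sum_matrix_inv_mult(2)[OF g_invertible[folded g_def]] by (simp add: gi_def)

lemma g_gi: "(\<Sum>j\<in>UNIV. g $ i $ j * gi j k) = (if i = k then 1 else 0)"
  using sum_matrix_inv_mult(1)[OF g_invertible[folded g_def]] by (simp add: gi_def)

lemma gis_gs: "(\<Sum>k\<in>UNIV. gis j k * gs $ k $ i) = (if j = i then 1 else 0)"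
  using sum_matrix_inv_mult(2)[OF gs_invertible[folded ls_def, folded gs_def]] by (simp add: gis_def)

lemma ls_y: "(\<Sum>k\<in>UNIV. ls k * y $ k) = Ls"
proof -
  have "(\<Sum>k\<in>UNIV. ls k * y $ k) = c * (\<Sum>k\<in>UNIV. l $ k * y $ k) + (\<Sum>k\<in>UNIV. b $ k * y $ k)"
    by (simp add: ls_def algebra_simps sum.distrib sum_distrib_left)
  then show ?thesis
    using euler_l Ls_eq by simp
qed

lemma m_y: "(\<Sum>k\<in>UNIV. m k * y $ k) = 0"
proof -
  have "(\<Sum>k\<in>UNIV. m k * y $ k) = (\<Sum>k\<in>UNIV. ls k * y $ k) - (Ls / L) * (\<Sum>k\<in>UNIV. l $ k * y $ k)"
    by (simp add: m_def algebra_simps sum_subtractf sum_distrib_left)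
  then show ?thesis
    using ls_y euler_l L_pos by simp
qed

lemma gi_l: "(\<Sum>k\<in>UNIV. gi j k * l $ k) = y $ j / L"
proof -
  have "(\<Sum>i\<in>UNIV. g $ k $ i * y $ i) = l $ k * (\<Sum>i\<in>UNIV. l $ i * y $ i) + L * (\<Sum>i\<in>UNIV. H k i * y $ i)" for k
    by (simp add: g_def algebra_simps sum.distrib sum_distrib_left)
  then have "(\<Sum>i\<in>UNIV. g $ k $ i * y $ i) = L * l $ k" for k
    by (simp add: euler_l euler_H)
  then show ?thesis
    unfolding gi_def using matrix_inv_solve[OF g_invertible[folded g_def]] L_pos by simp
qed

lemma gis_ls: "(\<Sum>k\<in>UNIV. gis j k * ls k) = y $ j / Ls"
proof -
  have "(\<Sum>i\<in>UNIV. gs $ k $ i * y $ i) = ls k * (\<Sum>i\<in>UNIV. ls i * y $ i) + Ls * c * (\<Sum>i\<in>UNIV. H k i * y $ i)" for k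
    by (simp add: gs_def algebra_simps sum.distrib sum_distrib_left)
  then have "(\<Sum>i\<in>UNIV. gs $ k $ i * y $ i) = Ls * ls k" for k
    by (simp add: ls_y euler_H)
  then show ?thesis
    unfolding gis_def
    using matrix_inv_solve[OF gs_invertible[folded ls_def, folded gs_def], of y Ls "\<chi> k. ls k"] Ls_pos
    by simp
qed

lemma gi_h: "(\<Sum>k\<in>UNIV. gi j k * h k i) = (if j = i then 1 else 0) - y $ j * l $ i / L"
proof -
  have "(\<Sum>k\<in>UNIV. gi j k * h k i) = (\<Sum>k\<in>UNIV. gi j k * g $ k $ i) - l $ i * (\<Sum>k\<in>UNIV. gi j k * l $ k)"
    by (simp add: h_def algebra_simps sum_subtractf sum_distrib_left)
  then show ?thesis
    by (simp add: gi_g gi_l)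
qed

lemma gis_decomposition:
  obtains p q where "\<And>j k. gis j k = gi j k / \<tau> + p j * y $ k + y $ j * q k"
proof -
  define p where "p j = (\<Sum>a\<in>UNIV. gis j a * l $ a)" for j
  define q where "q k = (\<Sum>a\<in>UNIV. gi k a * ls a)" for k
  have gs_gi: "(\<Sum>b\<in>UNIV. gs $ a $ b * gi b k) = \<tau> * (if a = k then 1 else 0) - \<tau> * l $ a * (y $ k / L) + ls a * q k" for a k
  proof -
    have "(\<Sum>b\<in>UNIV. gs $ a $ b * gi b k) = \<tau> * (\<Sum>b\<in>UNIV. g $ a $ b * gi b k)
        - \<tau> * l $ a * (\<Sum>b\<in>UNIV. gi k b * l $ b) + ls a * (\<Sum>b\<in>UNIV. gi k b * ls b)"
      by (simp add: gs_eq gi_sym[of _ k] algebra_simps sum.distrib sum_subtractf sum_distrib_left)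
    then show ?thesis
      by (simp add: g_gi gi_l q_def)
  qed
  have "gis j k = gi j k / \<tau> + (p j / L) * y $ k + y $ j * (- q k / (\<tau> * Ls))" for j k
  proof -
    have "gi j k = (\<Sum>b\<in>UNIV. (\<Sum>a\<in>UNIV. gis j a * gs $ a $ b) * gi b k)"
      by (simp add: gis_gs if_distrib if_distribR cong: if_cong)
    also have "\<dots> = (\<Sum>a\<in>UNIV. gis j a * (\<Sum>b\<in>UNIV. gs $ a $ b * gi b k))"
      by (simp only: sum_distrib_left sum_distrib_right mult.assoc) (rule sum.swap)
    also have "\<dots> = \<tau> * (\<Sum>a\<in>UNIV. gis j a * (if a = k then 1 else 0))
        - \<tau> * (y $ k / L) * (\<Sum>a\<in>UNIV. gis j a * l $ a) + q k * (\<Sum>a\<in>UNIV. gis j a * ls a)"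
      by (simp only: gs_gi) (simp add: algebra_simps sum.distrib sum_subtractf sum_distrib_left)
    also have "\<dots> = \<tau> * gis j k - \<tau> * (y $ k / L) * p j + q k * (y $ j / Ls)"
      by (simp add: gis_ls p_def if_distrib if_distribR cong: if_cong)
    finally show ?thesis
      using \<tau>_pos by (simp add: field_simps)
  qed
  then show ?thesis
    by (rule that[of "\<lambda>j. p j / L" "\<lambda>k. - q k / (\<tau> * Ls)"])
qed

lemma trace_gis:
  assumes X_sym: "\<And>j k. X j k = X k j" and X_y: "\<And>j. (\<Sum>k\<in>UNIV. X j k * y $ k) = 0"
  shows "(\<Sum>j\<in>UNIV. \<Sum>k\<in>UNIV. gis j k * X j k) = (\<Sum>j\<in>UNIV. \<Sum>k\<in>UNIV. gi j k * X j k) / \<tau>"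
proof -
  obtain p q where gis: "\<And>j k. gis j k = gi j k / \<tau> + p j * y $ k + y $ j * q k"
    using gis_decomposition by blast
  have y_X: "(\<Sum>j\<in>UNIV. X j k * y $ j) = 0" for k
    using X_y[of k] by (simp add: X_sym[of _ k])
  have "(\<Sum>j\<in>UNIV. \<Sum>k\<in>UNIV. gis j k * X j k) = (\<Sum>j\<in>UNIV. \<Sum>k\<in>UNIV. gi j k * X j k / \<tau>)
      + (\<Sum>j\<in>UNIV. \<Sum>k\<in>UNIV. p j * (X j k * y $ k)) + (\<Sum>j\<in>UNIV. \<Sum>k\<in>UNIV. q k * (X j k * y $ j))"
    by (simp add: gis algebra_simps sum.distrib)
  also have "(\<Sum>j\<in>UNIV. \<Sum>k\<in>UNIV. p j * (X j k * y $ k)) = 0"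
    by (simp add: sum_distrib_left[symmetric] X_y)
  also have "(\<Sum>j\<in>UNIV. \<Sum>k\<in>UNIV. q k * (X j k * y $ j)) = 0"
    by (subst sum.swap) (simp add: sum_distrib_left[symmetric] y_X)
  finally show ?thesis
    by (simp add: sum_divide_distrib)
qed

lemma Cs_sym: "Cs i j k = Cs i k j"
  by (simp add: Cs_def T_sym[of i j k] H_sym[of j k] algebra_simps)

lemma Cs_y: "(\<Sum>k\<in>UNIV. Cs i j k * y $ k) = 0"
proof -
  have "(\<Sum>k\<in>UNIV. Cs i j k * y $ k) = (c/2) * (ls j * (\<Sum>k\<in>UNIV. H i k * y $ k)
      + ls i * (\<Sum>k\<in>UNIV. H j k * y $ k) + H i j * (\<Sum>k\<in>UNIV. ls k * y $ k)
      + Ls * (\<Sum>k\<in>UNIV. T i j k * y $ k))"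
    by (simp add: Cs_def algebra_simps sum.distrib sum_distrib_left)
  then show ?thesis
    by (simp add: euler_H ls_y euler_T)
qed

lemma Cs_eq: "Cs i j k = \<tau> * C i j k + c / (2 * L) * (h i k * m j + h j k * m i + h i j * m k)"
  using L_pos by (simp add: Cs_def C_def h_eq \<tau>_def m_def field_simps)

lemma trace_h_m: "(\<Sum>j\<in>UNIV. \<Sum>k\<in>UNIV. gi j k * (h i k * m j)) = m i"
proof -
  have "(\<Sum>j\<in>UNIV. \<Sum>k\<in>UNIV. gi j k * (h i k * m j)) = (\<Sum>j\<in>UNIV. m j * (\<Sum>k\<in>UNIV. gi j k * h k i))"
    by (simp add: sum_distrib_left h_sym[of i] mult_ac)
  also have "\<dots> = (\<Sum>j\<in>UNIV. m j * (if j = i then 1 else 0)) - l $ i / L * (\<Sum>j\<in>UNIV. m j * y $ j)"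
    by (simp add: gi_h algebra_simps sum_subtractf sum_distrib_left)
  finally show ?thesis
    by (simp add: m_y if_distrib if_distribR cong: if_cong)
qed

lemma trace_h: "(\<Sum>j\<in>UNIV. \<Sum>k\<in>UNIV. gi j k * h j k) = real CARD('n) - 1"
proof -
  have "(\<Sum>j\<in>UNIV. \<Sum>k\<in>UNIV. gi j k * h j k) = (\<Sum>j\<in>UNIV. 1 - l $ j * y $ j / L)"
    using gi_h by (simp add: h_sym[of _ "j" for j] mult.commute)
  also have "\<dots> = real CARD('n) - (\<Sum>j\<in>UNIV. l $ j * y $ j) / L"
    by (simp add: sum_subtractf sum_divide_distrib)
  finally show ?thesis
    using euler_l L_pos by simp
qed

lemma cvs_eq: "cvs i = cv i + (real CARD('n) + 1) * m i / (2 * Ls)"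
proof -
  have swap: "(\<Sum>j\<in>UNIV. \<Sum>k\<in>UNIV. gi j k * (h i j * m k)) = m i"
    using trace_h_m by (subst sum.swap) (simp add: gi_sym[of _ "k" for k])
  have "cvs i = (\<Sum>j\<in>UNIV. \<Sum>k\<in>UNIV. gi j k * Cs i j k) / \<tau>"
    unfolding cvs_def by (rule trace_gis) (simp_all add: Cs_sym Cs_y)
  also have "(\<Sum>j\<in>UNIV. \<Sum>k\<in>UNIV. gi j k * Cs i j k) = \<tau> * cv i + c / (2 * L) *
      ((\<Sum>j\<in>UNIV. \<Sum>k\<in>UNIV. gi j k * (h i k * m j)) + (\<Sum>j\<in>UNIV. \<Sum>k\<in>UNIV. gi j k * h j k) * m i
        + (\<Sum>j\<in>UNIV. \<Sum>k\<in>UNIV. gi j k * (h i j * m k)))"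
    by (simp add: Cs_eq cv_def algebra_simps sum.distrib sum_distrib_left sum_distrib_right)
  also have "\<dots> = \<tau> * cv i + c / (2 * L) * ((real CARD('n) + 1) * m i)"
    by (simp add: trace_h_m trace_h swap algebra_simps)
  also have "\<dots> = \<tau> * (cv i + (real CARD('n) + 1) * m i / (2 * Ls))"
    using L_pos Ls_pos by (simp add: \<tau>_def field_simps)
  finally show ?thesis
    using \<tau>_pos by simp
qed

lemma Ms_eq: "Ms i = M i + m i / (2 * Ls)"
  by (simp add: Ms_def M_def cvs_eq add_divide_distrib)

lemma reducibility_defect_eq:
  "Cs i j k - (hs i j * Ms k + hs j k * Ms i + hs k i * Ms j)
     = \<tau> * (C i j k - (h i j * M k + h j k * M i + h k i * M j))"
  using L_pos Ls_pos by (simp add: Cs_eq hs_eq Ms_eq h_sym[of k i] \<tau>_def field_simps)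

lemma C_reducible_iff:
  "(\<forall>i j k. C i j k = h i j * M k + h j k * M i + h k i * M j) \<longleftrightarrow>
   (\<forall>i j k. Cs i j k = hs i j * Ms k + hs j k * Ms i + hs k i * Ms j)"
  using reducibility_defect_eq \<tau>_pos by (metis eq_iff_diff_eq_0 mult_eq_0_iff less_irrefl)

end

definition C_reducible_at :: "(real^'n \<Rightarrow> real) \<Rightarrow> real^'n \<Rightarrow> bool" where
  "C_reducible_at F y \<longleftrightarrow> (\<forall>i j k. ctens F y i j k =
     htens F y i j * Mvec F y k + htens F y j k * Mvec F y i + htens F y k i * Mvec F y j)"

context positively_homogeneous
begin

lemma beta_change_algebra_at:
  assumes "y \<noteq> 0" "F y > 0" "c > 0" "fibre_beta_change c b F y > 0"
    and "invertible (gmat F y)" "invertible (gmat (fibre_beta_change c b F) y)"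
  shows "beta_change_algebra (F y) (fibre_beta_change c b F y) c (\<chi> i. dy F i y) b y
    (\<lambda>i j. dy (dy F i) j y) (\<lambda>i j k. dy (dy (dy F i) j) k y)"
proof
  show "fibre_beta_change c b F y = c * F y + (\<Sum>i\<in>UNIV. b $ i * y $ i)"
    by (simp add: fibre_beta_change_def)
  show "invertible (\<chi> i j. (\<chi> i. dy F i y) $ i * (\<chi> i. dy F i y) $ j + F y * dy (dy F i) j y)"
    using assms(5) gmat_eq[OF partials3 assms(1)] by simp
  show "invertible (\<chi> i j. (c * (\<chi> i. dy F i y) $ i + b $ i) * (c * (\<chi> i. dy F i y) $ j + b $ j)
      + fibre_beta_change c b F y * (c * dy (dy F i) j y))"
    using assms(6) gmat_eq[OF partials3_differentiable_fibre_beta_change[OF partials3] assms(1)]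
    by (simp add: dy_fibre_beta_change[OF partials3 assms(1)] dy_dy_fibre_beta_change[OF partials3 assms(1)])
qed (use assms euler[OF assms(1)] euler_dy[OF assms(1)] euler_dy_dy[OF assms(1)]
      dy_dy_sym[OF assms(1)] dy_dy_dy_sym[OF assms(1)] in simp_all)

lemma C_reducible_at_fibre_beta_change_iff:
  assumes "y \<noteq> 0" "F y > 0" "c > 0" "fibre_beta_change c b F y > 0"
    and "invertible (gmat F y)" "invertible (gmat (fibre_beta_change c b F) y)"
  shows "C_reducible_at (fibre_beta_change c b F) y \<longleftrightarrow> C_reducible_at F y"
proof -
  let ?G = "fibre_beta_change c b F"
  interpret A: beta_change_algebra "F y" "?G y" c "\<chi> i. dy F i y" b y
    "\<lambda>i j. dy (dy F i) j y" "\<lambda>i j k. dy (dy (dy F i) j) k y"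
    by (rule beta_change_algebra_at[OF assms])
  have G: "partials3_differentiable_off_0 ?G"
    by (rule partials3_differentiable_fibre_beta_change[OF partials3])
  note dG = dy_fibre_beta_change[OF partials3 assms(1)] dy_dy_fibre_beta_change[OF partials3 assms(1)]
    dy_dy_dy_fibre_beta_change[OF partials3 assms(1)]
  have g: "gmat F y = A.g" "gmat ?G y = A.gs"
    by (simp_all add: gmat_eq[OF partials3 assms(1)] gmat_eq[OF G assms(1)] A.g_def A.gs_def A.ls_def dG)
  have C: "ctens F y i j k = A.C i j k" "ctens ?G y i j k = A.Cs i j k" for i j k
    by (simp_all add: ctens_eq[OF partials3 assms(1)] ctens_eq[OF G assms(1)] A.C_def A.Cs_def A.ls_def dG)
  have h: "htens F y i j = A.h i j" "htens ?G y i j = A.hs i j" for i j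
    by (simp_all add: htens_def ltens_def gtens_eq[OF partials3 assms(1)] gtens_eq[OF G assms(1)]
        A.h_def A.g_def A.hs_def A.gs_def A.ls_def dG)
  have M: "Mvec F y i = A.M i" "Mvec ?G y i = A.Ms i" for i
    by (simp_all add: Mvec_def cvec_def ginv_def C g A.M_def A.Ms_def A.cv_def A.cvs_def A.gi_def A.gis_def)
  show ?thesis
    unfolding C_reducible_at_def C h M using A.C_reducible_iff by simp
qed

end

lemma foldr_pdir_slice:
  fixes L :: "'a::euclidean_space \<Rightarrow> 'b::euclidean_space \<Rightarrow> real"
  assumes smooth: "smooth_on (U \<times> S) (\<lambda>(x, y). L x y)" and "open U" "open S" "x \<in> U"
    and "set vs \<subseteq> Basis" "z \<in> S"
  shows "foldr (\<lambda>v g. pdir g v) (map (\<lambda>v. (0, v)) vs) (\<lambda>(x, y). L x y) (x, z)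
           = foldr (\<lambda>v g. pdir g v) vs (L x) z"
  using assms(5,6)
proof (induction vs arbitrary: z)
  case (Cons v vs)
  let ?D = "foldr (\<lambda>v g. pdir g v) (map (\<lambda>v. (0, v)) vs) (\<lambda>(x, y). L x y)"
  have "set (map (\<lambda>v. (0::'a, v)) vs) \<subseteq> Basis"
    using Cons.prems by (auto simp: Basis_prod_def)
  then have "?D differentiable_on (U \<times> S)"
    using smooth unfolding smooth_on_def by blast
  then have "?D differentiable at (x, z)"
    using assms(2-4) Cons.prems by (simp add: open_Times differentiable_on_eq_differentiable_at)
  moreover have "((\<lambda>z. (x, z)) has_derivative (\<lambda>w. (0, w))) (at z)"
    by (auto intro!: derivative_eq_intros)
  ultimately have "((\<lambda>z. ?D (x, z)) has_derivative (\<lambda>w. frechet_derivative ?D (at (x, z)) (0, w))) (at z)"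
    using has_derivative_compose frechet_derivative_works by blast
  then have "pdir (\<lambda>z. ?D (x, z)) v z = pdir ?D (0, v) (x, z)"
    unfolding pdir_def[of ?D] by (rule pdir_eq_derivative)
  also have "pdir (\<lambda>z. ?D (x, z)) v z = pdir (foldr (\<lambda>v g. pdir g v) vs (L x)) v z"
    using pdir_transform_open[OF assms(3) Cons.prems(2), of "\<lambda>z. ?D (x, z)"] Cons by auto
  finally show ?case by simp
qed simp

lemma differentiable_foldr_pdir_slice:
  fixes L :: "'a::euclidean_space \<Rightarrow> 'b::euclidean_space \<Rightarrow> real"
  assumes smooth: "smooth_on (U \<times> S) (\<lambda>(x, y). L x y)" and "open U" "open S" "x \<in> U"
    and "set vs \<subseteq> Basis" "z \<in> S"
  shows "foldr (\<lambda>v g. pdir g v) vs (L x) differentiable at z"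
proof -
  let ?D = "foldr (\<lambda>v g. pdir g v) (map (\<lambda>v. (0, v)) vs) (\<lambda>(x, y). L x y)"
  have "set (map (\<lambda>v. (0::'a, v)) vs) \<subseteq> Basis"
    using assms(5) by (auto simp: Basis_prod_def)
  then have "?D differentiable_on (U \<times> S)"
    using smooth unfolding smooth_on_def by blast
  then have "?D differentiable at (x, z)"
    using assms(2-4,6) by (simp add: open_Times differentiable_on_eq_differentiable_at)
  then have "(\<lambda>z. ?D (x, z)) differentiable at z"
    using differentiable_chain_at[of "\<lambda>z. (x, z)" z ?D] by (simp add: o_def)
  then show ?thesis
    using differentiable_transform_open[OF _ assms(3,6)] foldr_pdir_slice[OF assms(1-5)] by blast
qed

lemma finsler_metric_partials3_differentiable:
  fixes L :: "real^'n \<Rightarrow> real^'n \<Rightarrow> real"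
  assumes "finsler_metric U L" "open U" "x \<in> U"
  shows "partials3_differentiable_off_0 (L x)"
  unfolding partials3_differentiable_off_0_def
proof (intro allI impI conjI)
  fix z :: "real^'n" and i j k :: 'n
  assume "z \<noteq> 0"
  moreover have "smooth_on (U \<times> (UNIV - {0})) (\<lambda>(x, y). L x y)"
    using assms(1) by (simp add: finsler_metric_def)
  moreover have "open (UNIV - {0::real^'n})"
    by (simp add: open_delete)
  moreover have "{axis i 1, axis j 1, axis k 1} \<subseteq> (Basis :: (real^'n) set)"
    by (auto simp: Basis_vec_def)
  ultimately have diff: "foldr (\<lambda>v g. pdir g v) vs (L x) differentiable at z"
    if "vs \<in> {[], [axis i 1], [axis j 1, axis i 1], [axis k 1, axis j 1, axis i 1]}" for vs
    using differentiable_foldr_pdir_slice[OF _ assms(2) _ assms(3), where vs=vs and z=z] that by auto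
  show "L x differentiable at z"
    using diff[of "[]"] by simp
  show "dy (L x) i differentiable at z"
    using diff[of "[axis i 1]"] by (simp add: dy_def)
  show "dy (dy (L x) i) j differentiable at z"
    using diff[of "[axis j 1, axis i 1]"] by (simp add: dy_def)
  show "dy (dy (dy (L x) i) j) k differentiable at z"
    using diff[of "[axis k 1, axis j 1, axis i 1]"] by (simp add: dy_def)
qed

lemma finsler_metric_positively_homogeneous:
  assumes "finsler_metric U L" "open U" "x \<in> U"
  shows "positively_homogeneous (L x)"
proof
  show "partials3_differentiable_off_0 (L x)"
    by (rule finsler_metric_partials3_differentiable[OF assms])
  show "L x (t *\<^sub>R z) = t * L x z" if "z \<noteq> 0" "t > 0" for z t
    using assms(1,3) that by (simp add: finsler_metric_def)
qed

lemma finsler_metric_gmat_invertible: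
  assumes "finsler_metric U L" "x \<in> U" "y \<noteq> 0"
  shows "invertible (gmat (L x) y)"
  using assms by (intro positive_definite_invertible) (simp add: finsler_metric_def gmat_def)

theorem theorem1:
  fixes U :: "(real^'n) set"
    and L :: "real^'n \<Rightarrow> real^'n \<Rightarrow> real"
    and \<sigma> :: "real^'n \<Rightarrow> real"
    and b :: "real^'n \<Rightarrow> real^'n"
  assumes "CARD('n) \<ge> 3"
    and "open U"
    and "finsler_metric U L"
    and "smooth_on U \<sigma>"
    and "\<forall>i. smooth_on U (\<lambda>x. b x $ i)"
    and "finsler_metric U (conf_beta_change \<sigma> b L)"
  shows "C_reducible U L \<longleftrightarrow> C_reducible U (conf_beta_change \<sigma> b L)"
proof -
  have "C_reducible_at (conf_beta_change \<sigma> b L x) y \<longleftrightarrow> C_reducible_at (L x) y"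
    if "x \<in> U" "y \<noteq> 0" for x y
  proof -
    interpret positively_homogeneous "L x"
      using finsler_metric_positively_homogeneous[OF assms(3,2) that(1)] .
    show ?thesis
      using that assms(3,6) finsler_metric_gmat_invertible[OF assms(3) that]
        finsler_metric_gmat_invertible[OF assms(6) that]
      unfolding conf_beta_change_eq_fibre_beta_change finsler_metric_def
      by (intro C_reducible_at_fibre_beta_change_iff) auto
  qed
  then show ?thesis
    unfolding C_reducible_def C_reducible_at_def[symmetric] by blast
qed

end
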